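(* For any metric space $(X,d)$, any $p\ge1$, and any $\mu\in\mathcal{P}_{p-1}(X)$, the set $M_p(\mu)\subseteq X$ is closed and bounded.
   Context: $\mathcal{P}_{p-1}(X)$ is the set of Borel probability measures $\mu$ on $(X,d)$ with $\int_X d^{p-1}(x,y)\,d\mu(y)<\infty$ for some (equivalently all) $x\in X$. For such $\mu$, $W_p(\mu,x,x'):=\int_X(d^p(x,y)-d^p(x',y))\,d\mu(y)$ and $M_p(\mu):=\{x\in X: W_p(\mu,x,x')\le0\text{ for all }x'\in X\}$. *)

theory Defs
  imports "HOL-Probability.Probability"
begin

text \<open>The metric space (X,d) is modelled by a type of class metric_space, with d = dist.
  Borel probability measures are measures M with prob_space M and sets M = sets borel.\<close>

definition P_pm1 :: "real \<Rightarrow> ('a::metric_space) measure set" where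
  "P_pm1 p = {M. prob_space M \<and> sets M = sets borel \<and>
      (\<exists>x. integrable M (\<lambda>y. dist x y powr (p - 1)))}"

definition W_p :: "real \<Rightarrow> ('a::metric_space) measure \<Rightarrow> 'a \<Rightarrow> 'a \<Rightarrow> real" where
  "W_p p M x x' = (\<integral>y. (dist x y powr p - dist x' y powr p) \<partial>M)"

definition M_p :: "real \<Rightarrow> ('a::metric_space) measure \<Rightarrow> 'a set" where
  "M_p p M = {x. \<forall>x'. W_p p M x x' \<le> 0}"

end

(*
  The tangent-line inequality for t \<mapsto> t^p gives
  |a^p - b^p| \<le> p |a - b| (a^(p-1) + b^(p-1)), so the (p-1)-st moment dominates the
  integrand of W_p(\<mu>, x, x') locally uniformly in x: x \<mapsto> W_p(\<mu>, x, x') is locally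
  Lipschitz, and M_p(\<mu>), an intersection of its sublevel sets, is closed.

  For boundedness fix x\<^sub>0 and r such that the tail integral of p d(x\<^sub>0,y)^(p-1) + 1 over
  {d(x\<^sub>0,y) > r} is below 1/2. If R = d(x\<^sub>0,x) is large, every y with d(x\<^sub>0,y) \<le> r
  contributes at least R - r - r^p to W_p(\<mu>, x, x\<^sub>0), while by the tangent inequality the
  loss on the tail is at most R times the tail integrand (the summand 1 pays for the
  missing R - r - r^p there). Hence W_p(\<mu>, x, x\<^sub>0) \<ge> R/2 - r - r^p > 0, so x \<notin> M_p(\<mu>).
*)

theory Submission
  imports Defs
begin

lemma powr_diff_ge_tangent:
  fixes a b p :: real
  assumes "0 \<le> a" "0 \<le> b" "1 \<le> p"
  shows "p * b powr (p - 1) * (a - b) \<le> a powr p - b powr p"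
proof (cases "b = 0")
  case True
  then show ?thesis using assms by simp
next
  case False
  then have b: "0 < b" using assms by simp
  show ?thesis
  proof (cases "a = 0")
    case True
    have "b * b powr (p - 1) = b powr p" using b by (simp add: powr_mult_base)
    moreover have "1 * b powr p \<le> p * b powr p" using assms by (intro mult_right_mono) auto
    ultimately show ?thesis using True by (simp add: algebra_simps)
  next
    case False
    then show ?thesis using assms b
      by (intro convex_on_imp_above_tangent[where A = "{0<..}"] powr_convex)
        (auto intro!: derivative_eq_intros simp: interior_open)
  qed
qed

lemma abs_powr_diff_le:
  fixes a b p :: real
  assumes "0 \<le> a" "0 \<le> b" "1 \<le> p"
  shows "\<bar>a powr p - b powr p\<bar> \<le> p * \<bar>a - b\<bar> * (a powr (p - 1) + b powr (p - 1))"
proof -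
  have two_sided: "\<bar>D\<bar> \<le> \<bar>s\<bar> * (A + B)"
    if "B * s \<le> D" "D \<le> A * s" "0 \<le> A" "0 \<le> B" for D s A B :: real
    using that by (smt (verit) mult_nonneg_nonneg mult_nonpos_nonneg distrib_left mult.commute)
  have "p * b powr (p - 1) * (a - b) \<le> a powr p - b powr p"
    and "p * a powr (p - 1) * (b - a) \<le> b powr p - a powr p"
    using assms by (auto intro: powr_diff_ge_tangent)
  then have "\<bar>a powr p - b powr p\<bar> \<le> \<bar>a - b\<bar> * (p * a powr (p - 1) + p * b powr (p - 1))"
    using assms by (intro two_sided) (auto simp: algebra_simps)
  then show ?thesis by (simp add: algebra_simps)
qed

lemma powr_add_le_two_powr:
  fixes u v q :: real
  assumes "0 \<le> u" "0 \<le> v" "0 \<le> q"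
  shows "(u + v) powr q \<le> 2 powr q * (u powr q + v powr q)"
proof -
  have "(u + v) powr q \<le> (2 * max u v) powr q" using assms by (intro powr_mono2) auto
  also have "\<dots> = 2 powr q * max u v powr q" using assms by (simp add: powr_mult)
  also have "\<dots> \<le> 2 powr q * (u powr q + v powr q)" by (simp add: max_def)
  finally show ?thesis .
qed

lemma abs_dist_powr_diff_le:
  fixes x x' y :: "'a::metric_space" and p :: real
  assumes "1 \<le> p"
  shows "\<bar>dist x y powr p - dist x' y powr p\<bar>
    \<le> p * dist x x' * (dist x y powr (p - 1) + dist x' y powr (p - 1))"
proof -
  have "\<bar>dist x y powr p - dist x' y powr p\<bar>
      \<le> p * \<bar>dist x y - dist x' y\<bar> * (dist x y powr (p - 1) + dist x' y powr (p - 1))"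
    using assms by (intro abs_powr_diff_le) auto
  also have "\<dots> \<le> p * dist x x' * (dist x y powr (p - 1) + dist x' y powr (p - 1))"
    using assms abs_dist_diff_le[of x y x']
    by (intro mult_right_mono mult_left_mono) (auto simp: dist_commute)
  finally show ?thesis .
qed

lemma dist_powr_diff_ge_tail_bound:
  fixes x x\<^sub>0 y :: "'a::metric_space" and p r :: real
  assumes "1 \<le> p" "0 \<le> r" "r + 1 \<le> dist x\<^sub>0 x"
  shows "dist x\<^sub>0 x - (r + r powr p)
      - dist x\<^sub>0 x * ((p * dist x\<^sub>0 y powr (p - 1) + 1) * indicator {y. r < dist x\<^sub>0 y} y)
    \<le> dist x y powr p - dist x\<^sub>0 y powr p"
proof (cases "r < dist x\<^sub>0 y")
  case False
  have "dist x\<^sub>0 x - r \<le> dist x y"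
    using False dist_triangle[of x\<^sub>0 x y] by (simp add: dist_commute)
  moreover have "dist x y powr 1 \<le> dist x y powr p"
    using calculation assms by (intro powr_mono) auto
  moreover have "dist x\<^sub>0 y powr p \<le> r powr p"
    using False assms by (intro powr_mono2) auto
  ultimately show ?thesis using False by simp
next
  case True
  have "- dist x\<^sub>0 x \<le> dist x y - dist x\<^sub>0 y"
    using dist_triangle[of x\<^sub>0 y x] by (simp add: dist_commute)
  then have "p * dist x\<^sub>0 y powr (p - 1) * (- dist x\<^sub>0 x)
      \<le> p * dist x\<^sub>0 y powr (p - 1) * (dist x y - dist x\<^sub>0 y)"
    using assms by (intro mult_left_mono) auto
  also have "\<dots> \<le> dist x y powr p - dist x\<^sub>0 y powr p"
    using assms by (intro powr_diff_ge_tangent) auto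
  finally show ?thesis
    using True assms by (simp add: algebra_simps add_increasing)
qed

lemma tendsto_integral_tail:
  fixes g h :: "'a \<Rightarrow> real"
  assumes "integrable M g" "h \<in> borel_measurable M"
  shows "(\<lambda>n. \<integral>y. g y * indicator {y. real n < h y} y \<partial>M) \<longlonglongrightarrow> 0"
proof -
  have "(\<lambda>n. \<integral>y. g y * indicator {y. real n < h y} y \<partial>M) \<longlonglongrightarrow> (\<integral>y. 0 \<partial>M)"
  proof (rule integral_dominated_convergence[where w = "\<lambda>y. \<bar>g y\<bar>"])
    show "AE y in M. (\<lambda>n. g y * indicator {y. real n < h y} y) \<longlonglongrightarrow> 0"
    proof (intro AE_I2 tendsto_eventually eventually_sequentiallyI)
      fix y n
      assume "nat \<lceil>h y\<rceil> \<le> n"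
      then have "h y \<le> real n" by linarith
      then show "g y * indicator {y. real n < h y} y = 0" by simp
    qed
  qed (use assms in \<open>auto simp: indicator_def\<close>)
  then show ?thesis by simp
qed

locale moment_prob_space = prob_space M
  for M :: "'a::metric_space measure" and p :: real +
  assumes sets_eq_borel: "sets M = sets borel"
    and one_le_p: "1 \<le> p"
    and integrable_moment: "\<exists>x. integrable M (\<lambda>y. dist x y powr (p - 1))"
begin

lemma borel_measurable_of_borel: "f \<in> borel_measurable M" if "f \<in> borel_measurable borel"
  using that measurable_cong_sets[OF sets_eq_borel refl] by blast

lemma borel_measurable_shifted_dist_powr: "(\<lambda>y. (c + dist x y) powr r) \<in> borel_measurable M"
  by (intro borel_measurable_of_borel powr_real_measurable borel_measurable_continuous_onI
      continuous_intros)

lemma integrable_shifted_moment: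
  assumes "0 \<le> c"
  shows "integrable M (\<lambda>y. (c + dist x y) powr (p - 1))"
proof -
  obtain x\<^sub>0 where x\<^sub>0: "integrable M (\<lambda>y. dist x\<^sub>0 y powr (p - 1))"
    using integrable_moment by blast
  let ?q = "p - 1" and ?c' = "c + dist x x\<^sub>0"
  show ?thesis
  proof (rule Bochner_Integration.integrable_bound)
    show "integrable M (\<lambda>y. 2 powr ?q * (?c' powr ?q + dist x\<^sub>0 y powr ?q))"
      using x\<^sub>0 by (intro integrable_mult_right integrable_add) auto
    have "(c + dist x y) powr ?q \<le> 2 powr ?q * (?c' powr ?q + dist x\<^sub>0 y powr ?q)" for y
    proof -
      have "(c + dist x y) powr ?q \<le> (?c' + dist x\<^sub>0 y) powr ?q"
        using one_le_p assms dist_triangle[of x y x\<^sub>0] by (intro powr_mono2) auto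
      also have "\<dots> \<le> 2 powr ?q * (?c' powr ?q + dist x\<^sub>0 y powr ?q)"
        using one_le_p assms by (intro powr_add_le_two_powr) auto
      finally show ?thesis .
    qed
    then show "AE y in M. norm ((c + dist x y) powr ?q)
        \<le> norm (2 powr ?q * (?c' powr ?q + dist x\<^sub>0 y powr ?q))"
      by (intro AE_I2) auto
  qed (rule borel_measurable_shifted_dist_powr)
qed

lemma integrable_moment_at: "integrable M (\<lambda>y. dist x y powr (p - 1))"
  using integrable_shifted_moment[of 0 x] by simp

lemma integrable_dist_powr_diff: "integrable M (\<lambda>y. dist x y powr p - dist x' y powr p)"
proof (rule Bochner_Integration.integrable_bound)
  show "integrable M (\<lambda>y. p * dist x x' * (dist x y powr (p - 1) + dist x' y powr (p - 1)))"
    by (auto intro!: integrable_moment_at)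
  show "(\<lambda>y. dist x y powr p - dist x' y powr p) \<in> borel_measurable M"
    using borel_measurable_shifted_dist_powr[of 0] by simp
  show "AE y in M. norm (dist x y powr p - dist x' y powr p)
      \<le> norm (p * dist x x' * (dist x y powr (p - 1) + dist x' y powr (p - 1)))"
    using one_le_p abs_dist_powr_diff_le[OF one_le_p] by (intro AE_I2) auto
qed

lemma W_p_split: "W_p p M x x' = W_p p M x z - W_p p M x' z"
  unfolding W_p_def
  by (subst Bochner_Integration.integral_diff[symmetric]) (auto intro: integrable_dist_powr_diff)

lemma lipschitz_on_W_p:
  "(\<integral>y. 2 * p * (1 + dist x y) powr (p - 1) \<partial>M)-lipschitz_on (cball x 1) (\<lambda>z. W_p p M z x')"
proof (rule lipschitz_onI)
  let ?K = "\<lambda>y. 2 * p * (1 + dist x y) powr (p - 1)"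
  show "0 \<le> integral\<^sup>L M ?K"
    using one_le_p by (intro integral_nonneg_AE) auto
  fix z z' assume z: "z \<in> cball x 1" and z': "z' \<in> cball x 1"
  have near: "dist w y powr (p - 1) \<le> (1 + dist x y) powr (p - 1)" if "w \<in> cball x 1" for w y
    using one_le_p that dist_triangle[of w y x] by (intro powr_mono2) (auto simp: dist_commute)
  have pointwise: "\<bar>dist z y powr p - dist z' y powr p\<bar> \<le> dist z z' * ?K y" for y
  proof -
    have "\<bar>dist z y powr p - dist z' y powr p\<bar>
        \<le> p * dist z z' * (dist z y powr (p - 1) + dist z' y powr (p - 1))"
      by (rule abs_dist_powr_diff_le[OF one_le_p])
    also have "\<dots> \<le> p * dist z z' * (2 * (1 + dist x y) powr (p - 1))"
      using one_le_p near[OF z, of y] near[OF z', of y] by (intro mult_left_mono) auto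
    finally show ?thesis by (simp add: algebra_simps)
  qed
  have "dist (W_p p M z x') (W_p p M z' x') = \<bar>W_p p M z z'\<bar>"
    using W_p_split[of z z' x'] by (simp add: dist_real_def)
  also have "\<dots> \<le> (\<integral>y. \<bar>dist z y powr p - dist z' y powr p\<bar> \<partial>M)"
    unfolding W_p_def by (rule integral_abs_bound)
  also have "\<dots> \<le> (\<integral>y. dist z z' * ?K y \<partial>M)"
    using pointwise one_le_p
    by (intro integral_mono' integrable_mult_right integrable_shifted_moment) auto
  finally show "dist (W_p p M z x') (W_p p M z' x') \<le> integral\<^sup>L M ?K * dist z z'"
    by (simp add: mult.commute)
qed

lemma continuous_on_W_p: "continuous_on UNIV (\<lambda>x. W_p p M x x')"
proof (intro continuous_at_imp_continuous_on ballI)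
  fix x
  have "continuous_on (cball x 1) (\<lambda>z. W_p p M z x')"
    by (rule lipschitz_on_continuous_on[OF lipschitz_on_W_p])
  then show "isCont (\<lambda>z. W_p p M z x') x"
    by (rule continuous_on_interior) (auto simp: mem_interior_cball intro!: exI[of _ 1])
qed

lemma closed_M_p: "closed (M_p p M)"
  unfolding M_p_def Collect_all_eq
  by (intro closed_INT ballI closed_Collect_le continuous_on_W_p continuous_on_const)

lemma W_p_ge_tail_bound:
  assumes "0 \<le> r" "r + 1 \<le> dist x\<^sub>0 x"
  shows "dist x\<^sub>0 x - (r + r powr p)
      - dist x\<^sub>0 x * (\<integral>y. (p * dist x\<^sub>0 y powr (p - 1) + 1) * indicator {y. r < dist x\<^sub>0 y} y \<partial>M)
    \<le> W_p p M x x\<^sub>0"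
proof -
  let ?tail = "\<lambda>y. (p * dist x\<^sub>0 y powr (p - 1) + 1) * indicator {y. r < dist x\<^sub>0 y} y"
  have "{y. r < dist x\<^sub>0 y} \<in> sets M"
    unfolding sets_eq_borel by (intro borel_open open_Collect_less continuous_intros)
  then have "integrable M ?tail"
    by (auto intro!: integrable_real_mult_indicator integrable_moment_at)
  then have "dist x\<^sub>0 x - (r + r powr p) - dist x\<^sub>0 x * integral\<^sup>L M ?tail
      = (\<integral>y. dist x\<^sub>0 x - (r + r powr p) - dist x\<^sub>0 x * ?tail y \<partial>M)"
    by (simp add: prob_space)
  also have "\<dots> \<le> W_p p M x x\<^sub>0"
    unfolding W_p_def using \<open>integrable M ?tail\<close> assms one_le_p
    by (intro integral_mono integrable_dist_powr_diff dist_powr_diff_ge_tail_bound) auto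
  finally show ?thesis .
qed

lemma bounded_M_p: "bounded (M_p p M)"
proof -
  fix x\<^sub>0 :: 'a
  let ?tail = "\<lambda>n. \<integral>y. (p * dist x\<^sub>0 y powr (p - 1) + 1) * indicator {y. real n < dist x\<^sub>0 y} y \<partial>M"
  have "?tail \<longlonglongrightarrow> 0"
    by (intro tendsto_integral_tail borel_measurable_of_borel borel_measurable_continuous_onI
        continuous_intros) (auto intro!: integrable_moment_at)
  then have "\<forall>\<^sub>F n in sequentially. ?tail n < 1 / 2"
    by (rule order_tendstoD) simp
  then obtain n where tail: "?tail n < 1 / 2"
    by (auto simp: eventually_sequentially)
  let ?B = "max (real n + 1) (2 * (real n + real n powr p))"
  have "dist x\<^sub>0 x \<le> ?B" if "x \<in> M_p p M" for x
  proof (rule ccontr)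
    assume "\<not> dist x\<^sub>0 x \<le> ?B"
    then have far: "real n + 1 \<le> dist x\<^sub>0 x" "2 * (real n + real n powr p) < dist x\<^sub>0 x"
      by auto
    have "dist x\<^sub>0 x * ?tail n \<le> dist x\<^sub>0 x * (1 / 2)"
      using tail by (intro mult_left_mono) auto
    moreover have "W_p p M x x\<^sub>0 \<le> 0"
      using that unfolding M_p_def by auto
    ultimately show False
      using W_p_ge_tail_bound[OF of_nat_0_le_iff far(1)] far(2) by argo
  qed
  then show ?thesis
    unfolding bounded_def by blast
qed

end

theorem corollary3p7:
  fixes M :: "('a::metric_space) measure" and p :: real
  assumes "p \<ge> 1" and "M \<in> P_pm1 p"
  shows "closed (M_p p M) \<and> bounded (M_p p M)"
proof -
  interpret moment_prob_space M p
    using assms unfolding P_pm1_def moment_prob_space_def moment_prob_space_axioms_def by auto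
  show ?thesis
    using closed_M_p bounded_M_p by simp
qed

end
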